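(* In the security 1st model, for every attacker AS $m$, destination AS $d$, and AS $s$ that, in normal conditions, has a secure route to $d$ that does not go through $m$, $s$ will use a secure route to $d$ even during $m$'s attack.
   Context: The AS-level topology is an undirected graph $G=(V,E)$ whose edges are annotated as customer-to-provider or peer-to-peer. For each destination AS $d$, every other AS selects one route among those announced to it by neighbors. An insecure AS ranks routes by: (LP, local preference) customer routes over peer routes over provider routes; (SP) shorter AS paths over longer ones; (TB) intradomain tiebreak. Export policy (Ex): a route via a customer is exported to all neighbors, otherwise only to customers. A set $S$ of ASes is secure (has deployed S*BGP); a route is secure if every AS on it is secure (it is learned via S*BGP), otherwise it is insecure. Each secure AS adds a step (SecP): prefer a secure route over an insecure route. In the security 1st model, SecP is placed before the LP step (all ASes use this same ordering). Attack: a single attacker AS $m$ (not actually adjacent to $d$) announces the bogus AS path "$m,d$" via legacy (insecure) BGP to all its neighbors; all ASes other than $m$ follow the policies above. "Normal conditions" means there is no attack. A protocol downgrade attack is when a source AS that uses a secure route to the legitimate destination under normal conditions switches to an insecure bogus route during the attack. *)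

theory Defs
  imports Main "HOL-Library.Product_Lexorder"
begin

text \<open>AS topology. cust x y: x is a customer of y (y is a provider of x).
  peer x y: x and y are peers. Routes are lists of ASes from the current AS
  to the destination (e.g. [v, u, ..., d]).\<close>

definition adj :: "('a \<Rightarrow> 'a \<Rightarrow> bool) \<Rightarrow> ('a \<Rightarrow> 'a \<Rightarrow> bool) \<Rightarrow> 'a \<Rightarrow> 'a \<Rightarrow> bool" where
  "adj cust peer x y \<longleftrightarrow> cust x y \<or> cust y x \<or> peer x y"

definition as_topology :: "('a \<Rightarrow> 'a \<Rightarrow> bool) \<Rightarrow> ('a \<Rightarrow> 'a \<Rightarrow> bool) \<Rightarrow> bool" where
  "as_topology cust peer \<longleftrightarrow>
     (\<forall>x y. peer x y \<longrightarrow> peer y x) \<and>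
     (\<forall>x. \<not> peer x x) \<and>
     (\<forall>x y. cust x y \<longrightarrow> \<not> peer x y) \<and>
     (\<forall>x. \<not> (cust\<^sup>+\<^sup>+) x x)"

definition tiebreak_wf :: "('a \<Rightarrow> 'a \<Rightarrow> bool) \<Rightarrow> ('a \<Rightarrow> 'a \<Rightarrow> bool) \<Rightarrow> ('a \<Rightarrow> 'a \<Rightarrow> nat) \<Rightarrow> bool" where
  "tiebreak_wf cust peer tb \<longleftrightarrow> (\<forall>v. inj_on (tb v) {u. adj cust peer v u})"

text \<open>A route is secure if every AS on it is secure; during an attack by m, a route containing
  m derives from m's legacy (insecure) bogus announcement and is insecure.
  att = None means normal conditions, att = Some m means m attacks.\<close>
definition secure_route :: "'a set \<Rightarrow> 'a option \<Rightarrow> 'a list \<Rightarrow> bool" where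
  "secure_route S att p \<longleftrightarrow> set p \<subseteq> S \<and> (\<forall>m. att = Some m \<longrightarrow> m \<notin> set p)"

definition exports :: "('a \<Rightarrow> 'a \<Rightarrow> bool) \<Rightarrow> 'a \<Rightarrow> 'a option \<Rightarrow> 'a \<Rightarrow> 'a list \<Rightarrow> 'a \<Rightarrow> bool" where
  "exports cust d att u p v \<longleftrightarrow>
     u = d \<or> att = Some u \<or> (\<exists>w rest. p = u # w # rest \<and> cust w u) \<or> cust v u"

definition offers :: "('a \<Rightarrow> 'a \<Rightarrow> bool) \<Rightarrow> ('a \<Rightarrow> 'a \<Rightarrow> bool) \<Rightarrow> 'a \<Rightarrow> 'a option
    \<Rightarrow> ('a \<Rightarrow> 'a list option) \<Rightarrow> 'a \<Rightarrow> 'a list set" where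
  "offers cust peer d att r v =
     {v # p | u p. adj cust peer v u \<and> r u = Some p \<and> v \<notin> set p \<and> exports cust d att u p v}"

definition lp_class :: "('a \<Rightarrow> 'a \<Rightarrow> bool) \<Rightarrow> ('a \<Rightarrow> 'a \<Rightarrow> bool) \<Rightarrow> 'a \<Rightarrow> 'a list \<Rightarrow> nat" where
  "lp_class cust peer v p = (if cust (p ! 1) v then 0 else if peer v (p ! 1) then 1 else 2)"

definition sec_class :: "'a set \<Rightarrow> 'a option \<Rightarrow> 'a \<Rightarrow> 'a list \<Rightarrow> nat" where
  "sec_class S att v p = (if v \<in> S \<and> \<not> secure_route S att p then 1 else 0)"

text \<open>Security 1st ranking: SecP, then LP, then SP, then TB (lexicographic, smaller is better).\<close>
definition rank1 :: "('a \<Rightarrow> 'a \<Rightarrow> bool) \<Rightarrow> ('a \<Rightarrow> 'a \<Rightarrow> bool) \<Rightarrow> 'a set \<Rightarrow> ('a \<Rightarrow> 'a \<Rightarrow> nat)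
    \<Rightarrow> 'a option \<Rightarrow> 'a \<Rightarrow> 'a list \<Rightarrow> nat \<times> nat \<times> nat \<times> nat" where
  "rank1 cust peer S tb att v p =
     (sec_class S att v p, lp_class cust peer v p, length p, tb v (p ! 1))"

definition stable1 :: "('a \<Rightarrow> 'a \<Rightarrow> bool) \<Rightarrow> ('a \<Rightarrow> 'a \<Rightarrow> bool) \<Rightarrow> 'a set \<Rightarrow> ('a \<Rightarrow> 'a \<Rightarrow> nat)
    \<Rightarrow> 'a \<Rightarrow> 'a option \<Rightarrow> ('a \<Rightarrow> 'a list option) \<Rightarrow> bool" where
  "stable1 cust peer S tb d att r \<longleftrightarrow>
     r d = Some [d] \<and>
     (\<forall>m. att = Some m \<longrightarrow> r m = Some [m, d]) \<and>
     (\<forall>v. v \<noteq> d \<and> att \<noteq> Some v \<longrightarrow>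
        (offers cust peer d att r v = {} \<longrightarrow> r v = None) \<and>
        (offers cust peer d att r v \<noteq> {} \<longrightarrow>
           (\<exists>p. r v = Some p \<and> p \<in> offers cust peer d att r v \<and>
                (\<forall>q \<in> offers cust peer d att r v.
                    rank1 cust peer S tb att v p \<le> rank1 cust peer S tb att v q))))"

end

theory Submission
  imports Defs
begin

text \<open>Induct along the secure normal-conditions route of s, strengthening the claim
  to: during the attack s uses a secure route, and a customer route if its normal route was one.
  Let w be the next hop. By induction w has a secure attack-time route q. If q passes through s,
  then s uses the corresponding suffix of q; the normal route of s cannot have been a customer
  route, since customer routes only descend the acyclic customer hierarchy. Otherwise w still
  exports q to s (the strengthening keeps the export condition valid), so s is offered the
  secure route s # q and, ranking security first, selects a secure route, of customer class
  whenever s # q is one.\<close>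

definition customer_route :: "('a \<Rightarrow> 'a \<Rightarrow> bool) \<Rightarrow> 'a \<Rightarrow> 'a list \<Rightarrow> bool" where
  "customer_route cust v q \<longleftrightarrow> Suc 0 < length q \<and> cust (q ! 1) v"

lemma as_topology_cust_acyclic: "as_topology cust peer \<Longrightarrow> \<not> cust\<^sup>+\<^sup>+ x x"
  unfolding as_topology_def by blast

lemma exports_iff_customer_route:
  "exports cust d att u (u # p) v \<longleftrightarrow>
     u = d \<or> att = Some u \<or> customer_route cust u (u # p) \<or> cust v u"
  unfolding exports_def customer_route_def by (cases p) auto

lemma stable1_dest: "stable1 cust peer S tb d att r \<Longrightarrow> r d = Some [d]"
  unfolding stable1_def by blast

lemma stable1_attacker: "stable1 cust peer S tb d (Some m) r \<Longrightarrow> r m = Some [m, d]"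
  unfolding stable1_def by blast

lemma stable1_offered:
  assumes "stable1 cust peer S tb d att r" "v \<noteq> d" "att \<noteq> Some v"
    and "q \<in> offers cust peer d att r v"
  shows "\<exists>p. r v = Some p \<and> p \<in> offers cust peer d att r v \<and>
           rank1 cust peer S tb att v p \<le> rank1 cust peer S tb att v q"
  using assms unfolding stable1_def by blast

lemma stable1_selected:
  assumes "stable1 cust peer S tb d att r" "v \<noteq> d" "att \<noteq> Some v" "r v = Some q"
  shows "q \<in> offers cust peer d att r v"
  using assms unfolding stable1_def by fastforce

lemma stable1_route_hd:
  assumes "stable1 cust peer S tb d att r" "r u = Some q"
  shows "\<exists>q'. q = u # q'"
proof (cases "u = d \<or> att = Some u")
  case True
  then show ?thesis using assms unfolding stable1_def by auto
next
  case False
  then show ?thesis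
    using stable1_selected[OF assms(1) _ _ assms(2)] unfolding offers_def by auto
qed

lemma offers_next_hop:
  assumes "stable1 cust peer S tb d att r" "q \<in> offers cust peer d att r v"
  shows "\<exists>w q'. q = v # w # q' \<and> r w = Some (w # q') \<and> adj cust peer v w \<and>
           v \<notin> set (w # q') \<and> exports cust d att w (w # q') v"
proof -
  obtain w p where "q = v # p" "r w = Some p" "adj cust peer v w" "v \<notin> set p"
    "exports cust d att w p v"
    using assms(2) unfolding offers_def by blast
  moreover obtain q' where "p = w # q'" using stable1_route_hd[OF assms(1) \<open>r w = Some p\<close>] by blast
  ultimately show ?thesis by blast
qed

lemma stable1_next_hop:
  assumes "stable1 cust peer S tb d att r" "v \<noteq> d" "att \<noteq> Some v" "r v = Some q"
  shows "\<exists>w q'. q = v # w # q' \<and> r w = Some (w # q') \<and> adj cust peer v w \<and>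
           v \<notin> set (w # q') \<and> exports cust d att w (w # q') v"
  using offers_next_hop[OF assms(1) stable1_selected[OF assms]] .

lemma stable1_route_through:
  assumes st: "stable1 cust peer S tb d att r"
  shows "r u = Some q \<Longrightarrow> v \<in> set q \<Longrightarrow> \<exists>q'. r v = Some q' \<and> set q' \<subseteq> set q"
proof (induction q arbitrary: u)
  case Nil
  then show ?case by simp
next
  case (Cons a q)
  have "a = u" using stable1_route_hd[OF st Cons.prems(1)] by simp
  consider "v = u" | "u = d" | "att = Some u" | "v \<noteq> u" "u \<noteq> d" "att \<noteq> Some u" by blast
  then show ?case
  proof cases
    case 1
    then show ?thesis using Cons.prems(1) by blast
  next
    case 2
    then show ?thesis using Cons.prems stable1_dest[OF st] by auto
  next
    case 3
    then have "a # q = [u, d]" using Cons.prems(1) stable1_attacker[OF st[unfolded 3]] by simp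
    then show ?thesis using Cons.prems stable1_dest[OF st] by auto
  next
    case 4
    then obtain w q' where "a # q = u # w # q'" "r w = Some (w # q')"
      using stable1_next_hop[OF st _ _ Cons.prems(1)] by blast
    then show ?thesis using Cons.IH[of w] Cons.prems(2) 4(1) by auto
  qed
qed

text \<open>Gao-Rexford export rules force a customer route to descend the customer hierarchy.\<close>
lemma customer_route_descends:
  assumes st: "stable1 cust peer S tb d att r" and top: "as_topology cust peer"
  shows "r u = Some q \<Longrightarrow> customer_route cust u q \<Longrightarrow> (\<forall>m. att = Some m \<longrightarrow> m \<notin> set q) \<Longrightarrow>
         x \<in> set (tl q) \<Longrightarrow> cust\<^sup>+\<^sup>+ x u"
proof (induction q arbitrary: u)
  case Nil
  then show ?case by simp
next
  case (Cons a q)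
  have "u \<noteq> d"
    using Cons.prems(1,2) stable1_dest[OF st] by (auto simp: customer_route_def)
  moreover have "att \<noteq> Some u"
    using Cons.prems(1,3) stable1_route_hd[OF st] by fastforce
  ultimately obtain w q' where q: "a # q = u # w # q'" and rw: "r w = Some (w # q')"
    and ex: "exports cust d att w (w # q') u"
    using stable1_next_hop[OF st _ _ Cons.prems(1)] by blast
  have wu: "cust w u" using Cons.prems(2) q by (simp add: customer_route_def)
  from ex consider "w = d" | "att = Some w" | "customer_route cust w (w # q')" | "cust u w"
    unfolding exports_iff_customer_route by blast
  then show ?case
  proof cases
    case 1
    then have "q' = []" using rw stable1_dest[OF st] by simp
    then show ?thesis using Cons.prems(4) q wu by auto
  next
    case 2
    then show ?thesis using Cons.prems(3) q by auto
  next
    case 3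
    have "x = w \<or> cust\<^sup>+\<^sup>+ x w"
      using Cons.IH[of w] 3 rw Cons.prems(3,4) q by auto
    then show ?thesis using wu by (auto intro: tranclp.trancl_into_trancl)
  next
    case 4
    then have "cust\<^sup>+\<^sup>+ u u" using wu by (meson tranclp.r_into_trancl tranclp.trancl_into_trancl)
    then show ?thesis using as_topology_cust_acyclic[OF top] by blast
  qed
qed

lemma exported_to_provider_avoids_provider:
  assumes st: "stable1 cust peer S tb d att r" and top: "as_topology cust peer"
    and rw: "r w = Some q" and no_att: "\<forall>m. att = Some m \<longrightarrow> m \<notin> set q"
    and ex: "exports cust d att w q v" and wv: "cust w v"
  shows "v \<notin> set q"
proof
  assume vq: "v \<in> set q"
  have acyc: "\<And>x. \<not> cust\<^sup>+\<^sup>+ x x" using as_topology_cust_acyclic[OF top] .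
  then have "v \<noteq> w" using wv by blast
  obtain q' where q: "q = w # q'" using stable1_route_hd[OF st rw] by blast
  from ex consider "w = d" | "att = Some w" | "customer_route cust w q" | "cust v w"
    unfolding q exports_iff_customer_route by blast
  then show False
  proof cases
    case 1
    then have "q = [d]" using rw stable1_dest[OF st] by simp
    then show False using vq \<open>v \<noteq> w\<close> 1 by simp
  next
    case 2
    then show False using no_att q by simp
  next
    case 3
    then have "cust\<^sup>+\<^sup>+ v w"
      using customer_route_descends[OF st top rw _ no_att] vq \<open>v \<noteq> w\<close> q by simp
    then show False using wv acyc by (meson tranclp.trancl_into_trancl)
  next
    case 4
    then show False using wv acyc by (meson tranclp.r_into_trancl tranclp.trancl_into_trancl)
  qed
qed

lemma rank1_le_secure:
  assumes "v \<in> S" "secure_route S att q" "rank1 cust peer S tb att v p \<le> rank1 cust peer S tb att v q"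
  shows "secure_route S att p \<and> lp_class cust peer v p \<le> lp_class cust peer v q"
  using assms unfolding rank1_def sec_class_def by (auto simp: less_eq_prod_def split: if_splits)

lemma stable1_selects_secure:
  assumes st: "stable1 cust peer S tb d att r" and "v \<noteq> d" "att \<noteq> Some v" "v \<in> S"
    and offered: "v # q \<in> offers cust peer d att r v" and sec: "secure_route S att (v # q)"
  shows "\<exists>p. r v = Some p \<and> secure_route S att p \<and>
           (customer_route cust v (v # q) \<longrightarrow> customer_route cust v p)"
proof -
  obtain p where rv: "r v = Some p" and p: "p \<in> offers cust peer d att r v"
    and rank: "rank1 cust peer S tb att v p \<le> rank1 cust peer S tb att v (v # q)"
    using stable1_offered[OF st assms(2,3) offered] by blast
  have "secure_route S att p" and lp: "lp_class cust peer v p \<le> lp_class cust peer v (v # q)"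
    using rank1_le_secure[OF \<open>v \<in> S\<close> sec rank] by blast+
  moreover have "Suc 0 < length p" using offers_next_hop[OF st p] by auto
  moreover have "cust (q ! 0) v \<longrightarrow> cust (p ! 1) v"
    using lp unfolding lp_class_def by (auto split: if_splits)
  ultimately show ?thesis using rv by (auto simp: customer_route_def)
qed

lemma secure_attack_route_preserved:
  fixes cust peer :: "'a \<Rightarrow> 'a \<Rightarrow> bool"
  assumes top: "as_topology cust peer" and md: "m \<noteq> d"
    and stN: "stable1 cust peer S tb d None rN"
    and stA: "stable1 cust peer S tb d (Some m) rA"
  shows "rN v = Some q0 \<Longrightarrow> secure_route S None q0 \<Longrightarrow> m \<notin> set q0 \<Longrightarrow>
    \<exists>q. rA v = Some q \<and> secure_route S (Some m) q \<and>
      (customer_route cust v q0 \<longrightarrow> customer_route cust v q)"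
proof (induction q0 arbitrary: v)
  case Nil
  then show ?case using stable1_route_hd[OF stN] by blast
next
  case (Cons a q0)
  have "a = v" using stable1_route_hd[OF stN Cons.prems(1)] by simp
  show ?case
  proof (cases "v = d")
    case True
    then have "a # q0 = [d]" using Cons.prems(1) stable1_dest[OF stN] by simp
    then show ?thesis
      using True Cons.prems(2) md stable1_dest[OF stA]
      by (auto simp: secure_route_def customer_route_def)
  next
    case vd: False
    have vm: "v \<noteq> m" and vS: "v \<in> S"
      using Cons.prems(2,3) \<open>a = v\<close> by (auto simp: secure_route_def)
    obtain w q0' where q0: "a # q0 = v # w # q0'" and rNw: "rN w = Some (w # q0')"
      and adj: "adj cust peer v w" and exN: "exports cust d None w (w # q0') v"
      using stable1_next_hop[OF stN vd _ Cons.prems(1)] by blast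
    obtain qA where rAw: "rA w = Some qA" and secA: "secure_route S (Some m) qA"
      and custA: "customer_route cust w (w # q0') \<longrightarrow> customer_route cust w qA"
      using Cons.IH[of w] rNw Cons.prems(2,3) q0 by (auto simp: secure_route_def)
    obtain qA' where qA: "qA = w # qA'" using stable1_route_hd[OF stA rAw] by blast
    have exA: "exports cust d (Some m) w qA v"
      using exN custA unfolding qA exports_iff_customer_route by blast
    have cust_q0: "customer_route cust v (a # q0) \<longleftrightarrow> cust w v"
      using q0 by (simp add: customer_route_def)
    show ?thesis
    proof (cases "v \<in> set qA")
      case True
      obtain q where "rA v = Some q" "set q \<subseteq> set qA"
        using stable1_route_through[OF stA rAw True] by blast
      moreover have "\<not> cust w v"
        using exported_to_provider_avoids_provider[OF stA top rAw _ exA] secA True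
        by (auto simp: secure_route_def)
      ultimately show ?thesis using secA cust_q0 by (auto simp: secure_route_def)
    next
      case False
      have "v # qA \<in> offers cust peer d (Some m) rA v"
        unfolding offers_def using adj rAw False exA by blast
      moreover have "secure_route S (Some m) (v # qA)"
        using secA vS vm by (simp add: secure_route_def)
      ultimately obtain q where "rA v = Some q" "secure_route S (Some m) q"
        "customer_route cust v (v # qA) \<longrightarrow> customer_route cust v q"
        using stable1_selects_secure[OF stA vd _ vS] vm by blast
      then show ?thesis using cust_q0 qA by (auto simp: customer_route_def)
    qed
  qed
qed

theorem theorem2:
  fixes cust peer :: "'a::finite \<Rightarrow> 'a \<Rightarrow> bool"
    and S :: "'a set" and tb :: "'a \<Rightarrow> 'a \<Rightarrow> nat"
    and m d s :: 'a and rN rA :: "'a \<Rightarrow> 'a list option" and p :: "'a list"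
  assumes "as_topology cust peer"
    and "tiebreak_wf cust peer tb"
    and "m \<noteq> d" and "\<not> adj cust peer m d"
    and "stable1 cust peer S tb d None rN"
    and "stable1 cust peer S tb d (Some m) rA"
    and "rN s = Some p" and "secure_route S None p" and "m \<notin> set p"
  shows "\<exists>q. rA s = Some q \<and> secure_route S (Some m) q"
  using secure_attack_route_preserved[OF assms(1,3,5,6) assms(7-9)] by blast

end
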